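(* The sign function is not definable in $Q_0$: there is no $\Sigma_m$-term $t(x)$ with only variable $x$ such that $t(q)=\mathrm{sign}(q)$ for all rationals $q$ (evaluated in $Q_0$), where $\mathrm{sign}(q)=-1$ if $q<0$, $0$ if $q=0$, $1$ if $q>0$.
   Context: $\Sigma_m=(0,1,+,\cdot,-,{}^{-1})$. $Q_0$ is the field of rational numbers with its usual $0,1,+,\cdot,-$ and with the total inverse $q^{-1}=1/q$ for $q\neq 0$ and $0^{-1}=0$. *)

theory Defs
  imports Complex_Main
begin

datatype tm = Var | Zero | One | Plus tm tm | Times tm tm | Neg tm | Inv tm

text \<open>Evaluation in Q_0: the rationals with total inverse (inverse 0 = 0 in Isabelle).\<close>
fun eval_Q0 :: "tm \<Rightarrow> rat \<Rightarrow> rat" where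
  "eval_Q0 Var q = q"
| "eval_Q0 Zero q = 0"
| "eval_Q0 One q = 1"
| "eval_Q0 (Plus s t) q = eval_Q0 s q + eval_Q0 t q"
| "eval_Q0 (Times s t) q = eval_Q0 s q * eval_Q0 t q"
| "eval_Q0 (Neg t) q = - eval_Q0 t q"
| "eval_Q0 (Inv t) q = inverse (eval_Q0 t q)"

lemma inverse_zero_rat: "inverse (0::rat) = 0" by simp

end

theory Submission
  imports Defs "HOL-Computational_Algebra.Polynomial"
begin

text \<open>
  Every term t(x) agrees, for all sufficiently large |q|, with a
  rational function p(q)/r(q) whose denominator r is a nonzero polynomial.  This
  is proved by induction on t: the field operations preserve this form, and for
  the total inverse the numerator p is either the zero polynomial (then t is
  eventually 0) or it has only finitely many roots, hence is nonzero for large |q|.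
  If t defined sgn, then p/r = 1 for all large positive q and p/r = -1 for all
  large negative q.  Since a nonzero polynomial has only finitely many roots,
  this forces p = r and p = -r, so r = 0, a contradiction.
\<close>

lemma poly_nonzero_at_infinity:
  fixes p :: "'a::linordered_field poly"
  assumes "p \<noteq> 0"
  shows "\<exists>M. \<forall>q. M < \<bar>q\<bar> \<longrightarrow> poly p q \<noteq> 0"
proof -
  let ?roots = "{x. poly p x = 0}"
  have "finite ?roots" using poly_roots_finite[OF assms] .
  then have "\<forall>x\<in>?roots. \<bar>x\<bar> \<le> (\<Sum>y\<in>?roots. \<bar>y\<bar>)"
    by (auto intro: member_le_sum)
  then show ?thesis by (metis (mono_tags, lifting) mem_Collect_eq not_le)
qed

lemma poly_eq_if_eq_on_infinite:
  fixes p r :: "'a::{field, ring_char_0} poly"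
  assumes "infinite S" and "\<forall>q\<in>S. poly p q = poly r q"
  shows "p = r"
proof (rule ccontr)
  assume "p \<noteq> r"
  then have "finite {x. poly (p - r) x = 0}" by (intro poly_roots_finite) simp
  moreover have "S \<subseteq> {x. poly (p - r) x = 0}" using assms(2) by auto
  ultimately show False using assms(1) finite_subset by blast
qed

definition rational_at_infinity ::
    "('a::linordered_field \<Rightarrow> 'a) \<Rightarrow> 'a poly \<Rightarrow> 'a poly \<Rightarrow> bool" where
  "rational_at_infinity f p r \<longleftrightarrow>
     r \<noteq> 0 \<and> (\<exists>M. \<forall>q. M < \<bar>q\<bar> \<longrightarrow> poly r q \<noteq> 0 \<and> f q = poly p q / poly r q)"

lemma rational_at_infinity_plus:
  assumes "rational_at_infinity f p1 r1" and "rational_at_infinity g p2 r2"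
  shows "rational_at_infinity (\<lambda>q. f q + g q) (p1 * r2 + p2 * r1) (r1 * r2)"
proof -
  obtain M1 M2 where
    "\<forall>q. M1 < \<bar>q\<bar> \<longrightarrow> poly r1 q \<noteq> 0 \<and> f q = poly p1 q / poly r1 q"
    "\<forall>q. M2 < \<bar>q\<bar> \<longrightarrow> poly r2 q \<noteq> 0 \<and> g q = poly p2 q / poly r2 q"
    using assms unfolding rational_at_infinity_def by blast
  then show ?thesis using assms unfolding rational_at_infinity_def
    by (intro conjI exI[of _ "max M1 M2"]) (auto simp: field_simps)
qed

lemma rational_at_infinity_times:
  assumes "rational_at_infinity f p1 r1" and "rational_at_infinity g p2 r2"
  shows "rational_at_infinity (\<lambda>q. f q * g q) (p1 * p2) (r1 * r2)"
proof -
  obtain M1 M2 where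
    "\<forall>q. M1 < \<bar>q\<bar> \<longrightarrow> poly r1 q \<noteq> 0 \<and> f q = poly p1 q / poly r1 q"
    "\<forall>q. M2 < \<bar>q\<bar> \<longrightarrow> poly r2 q \<noteq> 0 \<and> g q = poly p2 q / poly r2 q"
    using assms unfolding rational_at_infinity_def by blast
  then show ?thesis using assms unfolding rational_at_infinity_def
    by (intro conjI exI[of _ "max M1 M2"]) auto
qed

lemma rational_at_infinity_neg:
  assumes "rational_at_infinity f p r"
  shows "rational_at_infinity (\<lambda>q. - f q) (- p) r"
  using assms unfolding rational_at_infinity_def by auto

text \<open>For the total inverse, a zero numerator makes the function eventually 0;
  otherwise the numerator is eventually nonzero and numerator and denominator swap.\<close>
lemma rational_at_infinity_inverse:
  assumes "rational_at_infinity f p r"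
  shows "\<exists>p' r'. rational_at_infinity (\<lambda>q. inverse (f q)) p' r'"
proof -
  obtain M where M: "\<forall>q. M < \<bar>q\<bar> \<longrightarrow> poly r q \<noteq> 0 \<and> f q = poly p q / poly r q"
    using assms unfolding rational_at_infinity_def by blast
  show ?thesis
  proof (cases "p = 0")
    case True
    then have "rational_at_infinity (\<lambda>q. inverse (f q)) 0 1"
      using M unfolding rational_at_infinity_def by auto
    then show ?thesis by blast
  next
    case False
    then obtain M0 where "\<forall>q. M0 < \<bar>q\<bar> \<longrightarrow> poly p q \<noteq> 0"
      using poly_nonzero_at_infinity by blast
    with M False have "rational_at_infinity (\<lambda>q. inverse (f q)) r p"
      unfolding rational_at_infinity_def by (intro conjI exI[of _ "max M M0"]) auto
    then show ?thesis by blast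
  qed
qed

lemma eval_Q0_rational_at_infinity:
  "\<exists>p r. rational_at_infinity (eval_Q0 t) p r"
proof (induction t)
  case Var
  have "rational_at_infinity (\<lambda>q. q) [:0, 1:] 1"
    unfolding rational_at_infinity_def by simp
  then show ?case by auto
next
  case Zero
  have "rational_at_infinity (\<lambda>q. 0) 0 1" unfolding rational_at_infinity_def by simp
  then show ?case by auto
next
  case One
  have "rational_at_infinity (\<lambda>q. 1) 1 1" unfolding rational_at_infinity_def by simp
  then show ?case by auto
next
  case (Plus s t)
  then show ?case by (auto dest: rational_at_infinity_plus)
next
  case (Times s t)
  then show ?case by (auto dest: rational_at_infinity_times)
next
  case (Neg t)
  then show ?case by (auto dest: rational_at_infinity_neg)
next
  case (Inv t)
  then show ?case by (auto dest: rational_at_infinity_inverse)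
qed

text \<open>A function that is rational at infinity is not eventually 1 at +infinity and
  eventually -1 at -infinity: this would force p = r and p = -r.\<close>
lemma rational_at_infinity_not_sgn_like:
  fixes f :: "'a::linordered_field \<Rightarrow> 'a"
  assumes "rational_at_infinity f p r"
  shows "\<not> (\<forall>q. (0 < q \<longrightarrow> f q = 1) \<and> (q < 0 \<longrightarrow> f q = -1))"
proof
  assume sgn_like: "\<forall>q. (0 < q \<longrightarrow> f q = 1) \<and> (q < 0 \<longrightarrow> f q = -1)"
  obtain M where M: "\<forall>q. M < \<bar>q\<bar> \<longrightarrow> poly r q \<noteq> 0 \<and> f q = poly p q / poly r q"
    and "r \<noteq> 0"
    using assms unfolding rational_at_infinity_def by blast
  let ?B = "max M 0"
  have "\<forall>q\<in>{?B<..}. poly p q = poly r q"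
    using M sgn_like by (auto simp: field_simps)
  then have "p = r" by (intro poly_eq_if_eq_on_infinite[OF infinite_Ioi])
  moreover have "\<forall>q\<in>{..< - ?B}. poly p q = poly (- r) q"
  proof
    fix q assume "q \<in> {..< - ?B}"
    then have "M < \<bar>q\<bar>" and "q < 0" by auto
    then have "poly r q \<noteq> 0" and "poly p q / poly r q = -1" using M sgn_like by auto
    then show "poly p q = poly (- r) q" by (simp add: field_simps)
  qed
  then have "p = - r" by (intro poly_eq_if_eq_on_infinite[OF infinite_Iio])
  ultimately have "r = 0" by (metis neg_equal_zero)
  with \<open>r \<noteq> 0\<close> show False by contradiction
qed

theorem corollary3:
  shows "\<not> (\<exists>t::tm. \<forall>q::rat. eval_Q0 t q = sgn q)"
proof
  assume "\<exists>t::tm. \<forall>q::rat. eval_Q0 t q = sgn q"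
  then obtain t where t: "\<forall>q::rat. eval_Q0 t q = sgn q" by blast
  obtain p r where "rational_at_infinity (eval_Q0 t) p r"
    using eval_Q0_rational_at_infinity by blast
  moreover have "\<forall>q. (0 < q \<longrightarrow> eval_Q0 t q = 1) \<and> (q < 0 \<longrightarrow> eval_Q0 t q = -1)"
    using t by simp
  ultimately show False using rational_at_infinity_not_sgn_like by blast
qed

end
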